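(* Let $(G,\vec\nu)$ be a signature game on a finite game graph $G$ with vertex set $V$ and maximal absolute integer weight $W$, such that every integer threshold $\nu_i\in\mathbb{Z}$ satisfies $\nu_i\geq -2\cdot W\cdot|V|$. Then player 1 has a winning strategy in $(G,\vec\nu)$ if and only if player 1 has a memoryless (positional) winning strategy in $(G,\vec\nu)$.
   Context: A finite two-player game graph $G=((V,E),(V_1,V_2))$ has a finite directed graph $(V,E)$ whose vertices are partitioned into player-1 vertices $V_1$ and player-2 vertices $V_2$, an initial vertex $v_0$, and a weight function $w:E\to\mathbb{Z}\cup\{-\omega\}$; $W$ is the maximum absolute value of the integer weights. Plays are infinite paths from $v_0$, the owner of the current vertex choosing the next edge. The weight of a finite path is the sum of its edge weights, with the convention $-\omega+z=-\omega$ for $z\in\mathbb{Z}\cup\{-\omega\}$. A signature game $(G,\vec\nu)$ has a threshold vector $\vec\nu=(\nu_1,\dots,\nu_{|V|})$ with $\nu_i\in\mathbb{Z}\cup\{+\infty,-\omega\}$, where $\nu_i$ is associated to vertex $v_i$. Player 1 wins a play $\rho=\rho_0\rho_1\dots$ iff (a) $\rho$ contains no cycle of negative weight and no cycle containing an edge of weight $-\omega$, and (b) for every $j$, if $\rho_j=v_i$ then $w(\rho_0\dots\rho_j)\geq\nu_i$, under the order $-\omega<z<+\infty$ for all $z\in\mathbb{Z}$ (so vertices with threshold $+\infty$ must never be visited). A memoryless strategy chooses the next edge depending only on the current vertex; a winning strategy ensures player 1 wins every consistent play. *)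

theory Defs
  imports Main
begin

datatype wt = WFin int | NegOmega

datatype thr = TFin int | PInf | TNegOmega

fun wt_add :: "wt \<Rightarrow> wt \<Rightarrow> wt" where
  "wt_add (WFin a) (WFin b) = WFin (a + b)"
| "wt_add _ _ = NegOmega"

text \<open>Order -omega < z < +infinity: does value x meet threshold t (x >= t)?\<close>
fun meets :: "wt \<Rightarrow> thr \<Rightarrow> bool" where
  "meets _ TNegOmega = True"
| "meets _ PInf = False"
| "meets (WFin z) (TFin n) = (n \<le> z)"
| "meets NegOmega (TFin n) = False"

text \<open>Finite game graph: finite vertex set V, edges E within V, player-1 vertices V1
  (player-2 vertices are V - V1), initial vertex v0, every vertex has a successor.\<close>
definition game_graph :: "'v set \<Rightarrow> ('v \<times> 'v) set \<Rightarrow> 'v set \<Rightarrow> 'v \<Rightarrow> bool" where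
  "game_graph V E V1 v0 \<longleftrightarrow> finite V \<and> E \<subseteq> V \<times> V \<and> V1 \<subseteq> V \<and> v0 \<in> V
     \<and> (\<forall>v\<in>V. \<exists>u. (v, u) \<in> E)"

definition maxW :: "('v \<times> 'v) set \<Rightarrow> ('v \<Rightarrow> 'v \<Rightarrow> wt) \<Rightarrow> int" where
  "maxW E w = Max ({\<bar>z\<bar> | z u v. (u, v) \<in> E \<and> w u v = WFin z} \<union> {0})"

definition seg_weight :: "('v \<Rightarrow> 'v \<Rightarrow> wt) \<Rightarrow> (nat \<Rightarrow> 'v) \<Rightarrow> nat \<Rightarrow> nat \<Rightarrow> wt" where
  "seg_weight w \<rho> i j = foldl wt_add (WFin 0) (map (\<lambda>k. w (\<rho> k) (\<rho> (Suc k))) [i..<j])"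

definition is_play :: "('v \<times> 'v) set \<Rightarrow> 'v \<Rightarrow> (nat \<Rightarrow> 'v) \<Rightarrow> bool" where
  "is_play E v0 \<rho> \<longleftrightarrow> \<rho> 0 = v0 \<and> (\<forall>i. (\<rho> i, \<rho> (Suc i)) \<in> E)"

text \<open>Winning condition of player 1 in the signature game: (a) every cycle in the play
  (a segment rho_i..rho_j, i<j, rho_i = rho_j) has non-negative integer weight, i.e. is
  neither negative nor contains an edge of weight -omega; (b) threshold condition.\<close>
definition wins1 :: "('v \<Rightarrow> 'v \<Rightarrow> wt) \<Rightarrow> ('v \<Rightarrow> thr) \<Rightarrow> (nat \<Rightarrow> 'v) \<Rightarrow> bool" where
  "wins1 w \<nu> \<rho> \<longleftrightarrow>
     (\<forall>i j. i < j \<and> \<rho> i = \<rho> j \<longrightarrow> (\<exists>z. seg_weight w \<rho> i j = WFin z \<and> 0 \<le> z))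
   \<and> (\<forall>j. meets (seg_weight w \<rho> 0 j) (\<nu> (\<rho> j)))"

text \<open>A (general, history-dependent) strategy of player 1 maps nonempty histories
  rho_0 ... rho_i (as lists, in order) ending in a player-1 vertex to a successor.\<close>
definition strategy1 :: "('v \<times> 'v) set \<Rightarrow> 'v set \<Rightarrow> ('v list \<Rightarrow> 'v) \<Rightarrow> bool" where
  "strategy1 E V1 \<sigma> \<longleftrightarrow> (\<forall>h. h \<noteq> [] \<and> last h \<in> V1 \<longrightarrow> (last h, \<sigma> h) \<in> E)"

definition memoryless :: "('v list \<Rightarrow> 'v) \<Rightarrow> bool" where
  "memoryless \<sigma> \<longleftrightarrow> (\<exists>f. \<forall>h. h \<noteq> [] \<longrightarrow> \<sigma> h = f (last h))"

definition consistent :: "'v set \<Rightarrow> ('v list \<Rightarrow> 'v) \<Rightarrow> (nat \<Rightarrow> 'v) \<Rightarrow> bool" where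
  "consistent V1 \<sigma> \<rho> \<longleftrightarrow> (\<forall>i. \<rho> i \<in> V1 \<longrightarrow> \<rho> (Suc i) = \<sigma> (map \<rho> [0..<Suc i]))"

definition winning1 :: "('v \<times> 'v) set \<Rightarrow> 'v set \<Rightarrow> 'v \<Rightarrow> ('v \<Rightarrow> 'v \<Rightarrow> wt) \<Rightarrow> ('v \<Rightarrow> thr)
    \<Rightarrow> ('v list \<Rightarrow> 'v) \<Rightarrow> bool" where
  "winning1 E V1 v0 w \<nu> \<sigma> \<longleftrightarrow> strategy1 E V1 \<sigma> \<and>
     (\<forall>\<rho>. is_play E v0 \<rho> \<and> consistent V1 \<sigma> \<rho> \<longrightarrow> wins1 w \<nu> \<rho>)"

end

theory Submission
  imports Defs "HOL-Library.Product_Lexorder" "HOL-Library.Product_Plus"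
begin

(* The weight of a finite path is summarised by its profile in int x int: the pair
   (- number of -omega edges, sum of the integer edge weights).  Profiles add up along
   concatenation, and with the lexicographic order a smaller profile is a "worse" path:
   a cycle is allowed by the winning condition iff its profile is >= 0, and a worse prefix
   meeting a threshold implies that every better prefix meets it too.

   Given any winning strategy sigma, every history consistent with sigma that ends in v
   is a prefix of a winning play; since winning plays contain no bad cycle, the profiles
   of these histories are bounded below componentwise by -|V| * (1, W).  Hence each
   reachable vertex v has a worst sigma-history, and the positional strategy plays at v
   what sigma plays after that worst history.  Along any play of the positional strategy
   the worst-history profile is a potential: profile(worst(rho_j)) <= profile(worst(rho_i))
   + profile(rho_i..rho_j).  On a cycle this forces a profile >= 0, and at every position
   the worst history (which meets the threshold) is dominated by the actual prefix.

   The argument does not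
   need the lower bound on the thresholds assumed in the theorem. *)

definition edge_profile :: "wt \<Rightarrow> int \<times> int" where
  "edge_profile x = (case x of WFin z \<Rightarrow> (0, z) | NegOmega \<Rightarrow> (-1, 0))"

definition profile :: "('v \<Rightarrow> 'v \<Rightarrow> wt) \<Rightarrow> (nat \<Rightarrow> 'v) \<Rightarrow> nat \<Rightarrow> nat \<Rightarrow> int \<times> int" where
  "profile w \<rho> i j = (\<Sum>k = i..<j. edge_profile (w (\<rho> k) (\<rho> (Suc k))))"

definition weight_of :: "int \<times> int \<Rightarrow> wt" where
  "weight_of p = (if fst p = 0 then WFin (snd p) else NegOmega)"

lemma lex_add_right_mono: "p \<le> q \<Longrightarrow> p + r \<le> q + (r :: int \<times> int)"
  by (auto simp: less_eq_prod_def)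

lemma lex_nonneg_if_le_add: "p \<le> p + (q :: int \<times> int) \<Longrightarrow> 0 \<le> q"
  using lex_add_right_mono[of p "p + q" "- p"] by simp

lemma profile_empty [simp]: "profile w \<rho> i i = 0"
  by (simp add: profile_def)

lemma profile_Suc: "i \<le> j \<Longrightarrow> profile w \<rho> i (Suc j) = profile w \<rho> i j + edge_profile (w (\<rho> j) (\<rho> (Suc j)))"
  by (simp add: profile_def)

lemma profile_split: "i \<le> j \<Longrightarrow> j \<le> k \<Longrightarrow> profile w \<rho> i k = profile w \<rho> i j + profile w \<rho> j k"
  unfolding profile_def by (simp add: sum.atLeastLessThan_concat)

lemma profile_cong: "(\<And>k. k \<le> j \<Longrightarrow> \<rho> k = \<rho>' k) \<Longrightarrow> profile w \<rho> i j = profile w \<rho>' i j"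
  unfolding profile_def by (intro sum.cong) auto

lemma profile_fst_nonpos: "fst (profile w \<rho> i j) \<le> 0"
  unfolding profile_def fst_sum by (intro sum_nonpos) (simp add: edge_profile_def split: wt.split)

lemma seg_weight_profile: "seg_weight w \<rho> i j = weight_of (profile w \<rho> i j)"
proof (induction j)
  case 0
  then show ?case by (simp add: seg_weight_def weight_of_def profile_def)
next
  case (Suc j)
  show ?case
  proof (cases "i \<le> j")
    case True
    have "seg_weight w \<rho> i (Suc j) = wt_add (seg_weight w \<rho> i j) (w (\<rho> j) (\<rho> (Suc j)))"
      using True by (simp add: seg_weight_def)
    then show ?thesis
      using Suc.IH profile_fst_nonpos[of w \<rho> i j]
      by (cases "w (\<rho> j) (\<rho> (Suc j))") (auto simp: profile_Suc[OF True] weight_of_def edge_profile_def)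
  next
    case False
    then show ?thesis by (simp add: seg_weight_def profile_def weight_of_def)
  qed
qed

lemma nonneg_profile: "0 \<le> profile w \<rho> i j \<Longrightarrow> fst (profile w \<rho> i j) = 0 \<and> 0 \<le> snd (profile w \<rho> i j)"
  using profile_fst_nonpos[of w \<rho> i j] by (auto simp: less_eq_prod_def)

lemma good_segment_iff: "(\<exists>z. seg_weight w \<rho> i j = WFin z \<and> 0 \<le> z) \<longleftrightarrow> 0 \<le> profile w \<rho> i j"
  using profile_fst_nonpos[of w \<rho> i j]
  by (auto simp: seg_weight_profile weight_of_def less_eq_prod_def)

lemma meets_profile_mono:
  assumes "meets (seg_weight w \<rho> 0 n) t" and "profile w \<rho> 0 n \<le> profile w \<rho>' 0 m"
  shows "meets (seg_weight w \<rho>' 0 m) t"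
  using assms profile_fst_nonpos[of w \<rho>' 0 m]
  by (cases t) (auto simp: seg_weight_profile weight_of_def less_eq_prod_def split: if_splits)

lemma maxW_finite:
  assumes "finite E"
  shows "finite ({\<bar>z\<bar> | z u v. (u, v) \<in> E \<and> w u v = WFin z} \<union> {0})"
proof -
  have "{\<bar>z\<bar> | z u v. (u, v) \<in> E \<and> w u v = WFin z} \<subseteq> (\<lambda>(u, v). \<bar>snd (edge_profile (w u v))\<bar>) ` E"
    by (force simp: edge_profile_def)
  moreover have "finite ((\<lambda>(u, v). \<bar>snd (edge_profile (w u v))\<bar>) ` E)"
    using assms by simp
  ultimately show ?thesis by (simp add: finite_subset)
qed

lemma maxW_nonneg: "finite E \<Longrightarrow> 0 \<le> maxW E w"
  unfolding maxW_def by (rule Max_ge[OF maxW_finite]) auto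

lemma edge_profile_lower_bound:
  assumes "finite E" and "(u, v) \<in> E"
  shows "-1 \<le> fst (edge_profile (w u v)) \<and> - maxW E w \<le> snd (edge_profile (w u v))"
proof (cases "w u v")
  case (WFin z)
  have "\<bar>z\<bar> \<le> maxW E w"
    unfolding maxW_def by (rule Max_ge[OF maxW_finite[OF assms(1)]]) (use assms WFin in blast)
  then show ?thesis using WFin by (simp add: edge_profile_def)
next
  case NegOmega
  then show ?thesis using maxW_nonneg[OF assms(1), of w] by (simp add: edge_profile_def)
qed

(* On a play without bad cycles, the prefix rho_0 ... rho_j has profile componentwise at
   least -N * (1, W), where N is the number of distinct vertices visited so far: the
   segment back to the first occurrence of rho_j is a good cycle, and otherwise the last
   edge enters a new vertex. *)
lemma prefix_profile_lower_bound:
  assumes finE: "finite E" and play: "is_play E v0 \<rho>"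
    and cycles: "\<And>i j. i < j \<Longrightarrow> \<rho> i = \<rho> j \<Longrightarrow> 0 \<le> profile w \<rho> i j"
  shows "- int (card (\<rho> ` {..j})) \<le> fst (profile w \<rho> 0 j)
       \<and> - maxW E w * int (card (\<rho> ` {..j})) \<le> snd (profile w \<rho> 0 j)"
proof (induction j rule: less_induct)
  case (less j)
  let ?W = "maxW E w" and ?N = "\<lambda>j. int (card (\<rho> ` {..j}))"
  have W0: "0 \<le> ?W" by (rule maxW_nonneg[OF finE])
  define i where "i = (LEAST i. \<rho> i = \<rho> j)"
  have "i \<le> j" and same: "\<rho> i = \<rho> j"
    unfolding i_def by (auto intro: Least_le LeastI)
  show ?case
  proof (cases "i < j")
    case True
    have "?N i \<le> ?N j" using \<open>i \<le> j\<close> by (auto intro: card_mono)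
    then have "?W * ?N i \<le> ?W * ?N j" using W0 by (simp add: mult_left_mono)
    moreover have "fst (profile w \<rho> i j) = 0 \<and> 0 \<le> snd (profile w \<rho> i j)"
      using nonneg_profile cycles[OF True same] by blast
    ultimately show ?thesis
      using less.IH[OF True] profile_split[of 0 i j w \<rho>] \<open>i \<le> j\<close> \<open>?N i \<le> ?N j\<close> by auto
  next
    case False
    show ?thesis
    proof (cases j)
      case 0
      then show ?thesis using W0 by simp
    next
      case (Suc m)
      have "\<rho> j \<notin> \<rho> ` {..m}"
      proof
        assume "\<rho> j \<in> \<rho> ` {..m}"
        then obtain k where "k \<le> m" "\<rho> k = \<rho> j" by auto
        then have "i \<le> k" unfolding i_def by (simp add: Least_le)
        then show False using False \<open>k \<le> m\<close> \<open>i \<le> j\<close> Suc by simp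
      qed
      then have "?N j = ?N m + 1" using Suc by (simp add: atMost_Suc)
      moreover have "(\<rho> m, \<rho> j) \<in> E" using play Suc unfolding is_play_def by auto
      ultimately show ?thesis
        using less.IH[of m] Suc edge_profile_lower_bound[OF finE, of "\<rho> m" "\<rho> j" w]
          profile_Suc[of 0 m w \<rho>] by (simp add: algebra_simps)
    qed
  qed
qed

lemma play_in_V:
  assumes "game_graph V E V1 v0" and "is_play E v0 \<rho>"
  shows "\<rho> k \<in> V"
proof (induction k)
  case 0
  then show ?case using assms unfolding game_graph_def is_play_def by simp
next
  case (Suc k)
  have "(\<rho> k, \<rho> (Suc k)) \<in> E" using assms(2) unfolding is_play_def by simp
  then show ?case using assms(1) unfolding game_graph_def by auto
qed

(* Every vertex has a successor; this fixes one, used where no strategy prescribes a move. *)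
definition some_successor :: "('v \<times> 'v) set \<Rightarrow> 'v \<Rightarrow> 'v" where
  "some_successor E v = (SOME u. (v, u) \<in> E)"

lemma some_successor:
  assumes "game_graph V E V1 v0" and "v \<in> V"
  shows "(v, some_successor E v) \<in> E"
proof -
  have "\<exists>u. (v, u) \<in> E" using assms unfolding game_graph_def by blast
  then show ?thesis unfolding some_successor_def by (rule someI_ex)
qed

lemma play_from_edges:
  assumes game: "game_graph V E V1 v0" and start: "\<rho> 0 = v0"
    and edges: "\<And>k. \<rho> k \<in> V \<Longrightarrow> (\<rho> k, \<rho> (Suc k)) \<in> E"
  shows "is_play E v0 \<rho>"
proof -
  have "\<rho> k \<in> V" for k
  proof (induction k)
    case 0
    then show ?case using start game unfolding game_graph_def by simp
  next
    case (Suc k)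
    then show ?case using edges[OF Suc] game unfolding game_graph_def by auto
  qed
  then show ?thesis using start edges unfolding is_play_def by blast
qed

(* A nonempty set of pairs whose components are bounded below has a lexicographic
   minimum (reduce to the well-order on nat x nat). *)
lemma lex_min_exists:
  fixes S :: "(int \<times> int) set"
  assumes "S \<noteq> {}" and bounded: "\<And>p. p \<in> S \<Longrightarrow> a \<le> fst p \<and> b \<le> snd p"
  shows "\<exists>p\<in>S. \<forall>q\<in>S. p \<le> q"
proof -
  define g where "g p = (nat (fst p - a), nat (snd p - b))" for p :: "int \<times> int"
  have reflect: "p \<le> q" if "p \<in> S" "q \<in> S" "g p \<le> g q" for p q
    using that bounded[OF that(1)] bounded[OF that(2)]
    by (auto simp: g_def less_eq_prod_def)
  define m where "m = (LEAST x. x \<in> g ` S)"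
  have "m \<in> g ` S" unfolding m_def using assms(1) by (auto intro: LeastI)
  then obtain p where "p \<in> S" "g p = m" by auto
  moreover have "m \<le> g q" if "q \<in> S" for q unfolding m_def using that by (auto intro: Least_le)
  ultimately show ?thesis using reflect by metis
qed

lemma history_last: "map \<rho> [0..<Suc k] \<noteq> [] \<and> last (map \<rho> [0..<Suc k]) = \<rho> k"
  by simp

primrec unroll :: "('v list \<Rightarrow> 'v) \<Rightarrow> 'v \<Rightarrow> nat \<Rightarrow> 'v list" where
  "unroll g v 0 = [v]"
| "unroll g v (Suc k) = unroll g v k @ [g (unroll g v k)]"

lemma sequence_from_successor_rule:
  "\<exists>\<rho>. \<rho> 0 = v \<and> (\<forall>k. \<rho> (Suc k) = g (map \<rho> [0..<Suc k]))"
proof -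
  define \<rho> where "\<rho> k = last (unroll g v k)" for k
  have step: "\<rho> (Suc k) = g (unroll g v k)" for k
    by (simp add: \<rho>_def)
  have unroll: "unroll g v k = map \<rho> [0..<Suc k]" for k
    by (induction k) (simp_all add: \<rho>_def[of 0] step)
  have "\<rho> (Suc k) = g (map \<rho> [0..<Suc k])" for k
    using step unroll by simp
  moreover have "\<rho> 0 = v" by (simp add: \<rho>_def)
  ultimately show ?thesis by blast
qed

(* Every finite history consistent with a strategy extends to a consistent play:
   after the prefix, player 1 follows the strategy and player 2 picks any successor. *)
lemma extend_consistent_prefix:
  assumes game: "game_graph V E V1 v0" and strat: "strategy1 E V1 \<sigma>"
    and start: "\<rho>0 0 = v0" and edges: "\<And>i. i < n \<Longrightarrow> (\<rho>0 i, \<rho>0 (Suc i)) \<in> E"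
    and cons: "\<And>i. i < n \<Longrightarrow> \<rho>0 i \<in> V1 \<Longrightarrow> \<rho>0 (Suc i) = \<sigma> (map \<rho>0 [0..<Suc i])"
  shows "\<exists>\<rho>. is_play E v0 \<rho> \<and> consistent V1 \<sigma> \<rho> \<and> (\<forall>i\<le>n. \<rho> i = \<rho>0 i)"
proof -
  define g where "g h = (if length h \<le> n then \<rho>0 (length h)
      else if last h \<in> V1 then \<sigma> h else some_successor E (last h))" for h
  obtain \<rho> where \<rho>0: "\<rho> 0 = v0" and \<rho>S: "\<And>k. \<rho> (Suc k) = g (map \<rho> [0..<Suc k])"
    using sequence_from_successor_rule[of v0 g] by blast
  have agree: "\<rho> i = \<rho>0 i" if "i \<le> n" for i
  proof (cases i)
    case 0
    then show ?thesis using start \<rho>0 by simp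
  next
    case (Suc j)
    then show ?thesis using that by (simp add: \<rho>S[of j] g_def)
  qed
  have beyond: "\<rho> (Suc k) = (if \<rho> k \<in> V1 then \<sigma> (map \<rho> [0..<Suc k]) else some_successor E (\<rho> k))"
    if "n \<le> k" for k
    using that unfolding \<rho>S[of k] g_def by simp
  have "is_play E v0 \<rho>"
  proof (rule play_from_edges[OF game])
    show "\<rho> 0 = v0" by (rule \<rho>0)
  next
    fix k assume "\<rho> k \<in> V"
    show "(\<rho> k, \<rho> (Suc k)) \<in> E"
    proof (cases "k < n")
      case True
      then show ?thesis using edges[OF True] agree[of k] agree[of "Suc k"] by simp
    next
      case False
      have "(\<rho> k, \<sigma> (map \<rho> [0..<Suc k])) \<in> E" if "\<rho> k \<in> V1"
        using strat that history_last[of \<rho> k] unfolding strategy1_def by metis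
      then show ?thesis
        using False beyond[of k] some_successor[OF game \<open>\<rho> k \<in> V\<close>] by auto
    qed
  qed
  moreover have "consistent V1 \<sigma> \<rho>"
    unfolding consistent_def
  proof (intro allI impI)
    fix i assume "\<rho> i \<in> V1"
    show "\<rho> (Suc i) = \<sigma> (map \<rho> [0..<Suc i])"
    proof (cases "i < n")
      case True
      have same_history: "map \<rho>0 [0..<Suc i] = map \<rho> [0..<Suc i]"
        using True agree by (intro map_cong) auto
      have "\<rho> (Suc i) = \<rho>0 (Suc i)" using agree True by simp
      also have "\<dots> = \<sigma> (map \<rho>0 [0..<Suc i])"
        using cons True \<open>\<rho> i \<in> V1\<close> agree[of i] by simp
      also have "\<dots> = \<sigma> (map \<rho> [0..<Suc i])" by (simp only: same_history)
      finally show ?thesis .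
    next
      case False
      then show ?thesis using beyond[of i] \<open>\<rho> i \<in> V1\<close> by simp
    qed
  qed
  ultimately show ?thesis using agree by blast
qed

lemma extend_consistent_play:
  assumes game: "game_graph V E V1 v0" and strat: "strategy1 E V1 \<sigma>"
    and play: "is_play E v0 r" and cons: "consistent V1 \<sigma> r"
    and edge: "(r n, u) \<in> E" and follows: "r n \<in> V1 \<Longrightarrow> u = \<sigma> (map r [0..<Suc n])"
  shows "\<exists>r'. is_play E v0 r' \<and> consistent V1 \<sigma> r' \<and> (\<forall>i\<le>n. r' i = r i) \<and> r' (Suc n) = u"
proof -
  define \<rho>0 where "\<rho>0 = r(Suc n := u)"
  have prefix: "map \<rho>0 [0..<Suc i] = map r [0..<Suc i]" if "i \<le> n" for i
    using that by (intro map_cong) (auto simp: \<rho>0_def)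
  have "\<exists>r'. is_play E v0 r' \<and> consistent V1 \<sigma> r' \<and> (\<forall>i\<le>Suc n. r' i = \<rho>0 i)"
  proof (rule extend_consistent_prefix[OF game strat])
    show "\<rho>0 0 = v0" using play by (simp add: \<rho>0_def is_play_def)
    show "(\<rho>0 i, \<rho>0 (Suc i)) \<in> E" if "i < Suc n" for i
      using that edge play unfolding is_play_def \<rho>0_def by (cases "i = n") simp_all
    show "\<rho>0 (Suc i) = \<sigma> (map \<rho>0 [0..<Suc i])" if "i < Suc n" "\<rho>0 i \<in> V1" for i
    proof -
      have "r i \<in> V1" using that by (simp add: \<rho>0_def)
      then have "\<rho>0 (Suc i) = \<sigma> (map r [0..<Suc i])"
        using that follows cons unfolding consistent_def \<rho>0_def by (cases "i = n") simp_all
      also have "\<dots> = \<sigma> (map \<rho>0 [0..<Suc i])" using prefix[of i] that by (simp only: less_Suc_eq_le)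
      finally show ?thesis .
    qed
  qed
  then obtain r' where "is_play E v0 r'" "consistent V1 \<sigma> r'" and agree: "\<forall>i\<le>Suc n. r' i = \<rho>0 i"
    by blast
  moreover have "\<forall>i\<le>n. r' i = r i" and "r' (Suc n) = u"
    using agree by (simp_all add: \<rho>0_def)
  ultimately show ?thesis by blast
qed

locale winning_strategy =
  fixes V :: "'v set" and E :: "('v \<times> 'v) set" and V1 :: "'v set" and v0 :: 'v
    and w :: "'v \<Rightarrow> 'v \<Rightarrow> wt" and \<nu> :: "'v \<Rightarrow> thr" and \<sigma> :: "'v list \<Rightarrow> 'v"
  assumes game: "game_graph V E V1 v0" and winning: "winning1 E V1 v0 w \<nu> \<sigma>"
begin

(* The sigma-consistent histories ending in v, each represented by a consistent play r
   together with the length n of the prefix r_0 ... r_n. *)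
definition histories :: "'v \<Rightarrow> ((nat \<Rightarrow> 'v) \<times> nat) set" where
  "histories v = {(\<rho>, n). is_play E v0 \<rho> \<and> consistent V1 \<sigma> \<rho> \<and> \<rho> n = v}"

definition hprofile :: "(nat \<Rightarrow> 'v) \<times> nat \<Rightarrow> int \<times> int" where
  "hprofile h = profile w (fst h) 0 (snd h)"

lemma history_wins:
  assumes "(\<rho>, n) \<in> histories v"
  shows "is_play E v0 \<rho> \<and> wins1 w \<nu> \<rho> \<and> \<rho> n = v"
  using assms winning unfolding histories_def winning1_def by auto

(* Histories are prefixes of winning plays, so their profiles are bounded below. *)
lemma history_profile_bounded:
  assumes "h \<in> histories v"
  shows "- int (card V) \<le> fst (hprofile h) \<and> - maxW E w * int (card V) \<le> snd (hprofile h)"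
proof -
  obtain \<rho> n where h: "h = (\<rho>, n)" by (cases h)
  have play: "is_play E v0 \<rho>" and wins: "wins1 w \<nu> \<rho>"
    using history_wins assms h by auto
  have finE: "finite E" using game unfolding game_graph_def by (meson finite_SigmaI finite_subset)
  have "0 \<le> profile w \<rho> i j" if "i < j" "\<rho> i = \<rho> j" for i j
    using wins that unfolding wins1_def good_segment_iff by blast
  then have bound: "- int (card (\<rho> ` {..n})) \<le> fst (profile w \<rho> 0 n)
      \<and> - maxW E w * int (card (\<rho> ` {..n})) \<le> snd (profile w \<rho> 0 n)"
    using prefix_profile_lower_bound[OF finE play] by blast
  have "card (\<rho> ` {..n}) \<le> card V"
    using game play_in_V[OF game play] unfolding game_graph_def by (intro card_mono) auto
  then have "maxW E w * int (card (\<rho> ` {..n})) \<le> maxW E w * int (card V)"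
    using maxW_nonneg[OF finE] by (simp add: mult_left_mono)
  then show ?thesis using bound \<open>card (\<rho> ` {..n}) \<le> card V\<close> h by (simp add: hprofile_def)
qed

definition worst :: "'v \<Rightarrow> (nat \<Rightarrow> 'v) \<times> nat" where
  "worst v = (SOME h. h \<in> histories v \<and> (\<forall>h'\<in>histories v. hprofile h \<le> hprofile h'))"

lemma worst:
  assumes "histories v \<noteq> {}"
  shows "worst v \<in> histories v \<and> (\<forall>h'\<in>histories v. hprofile (worst v) \<le> hprofile h')"
proof -
  have "\<exists>p\<in>hprofile ` histories v. \<forall>q\<in>hprofile ` histories v. p \<le> q"
  proof (rule lex_min_exists)
    show "hprofile ` histories v \<noteq> {}" using assms by simp
    show "- int (card V) \<le> fst p \<and> - maxW E w * int (card V) \<le> snd p"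
      if "p \<in> hprofile ` histories v" for p
      using that history_profile_bounded by blast
  qed
  then have "\<exists>h. h \<in> histories v \<and> (\<forall>h'\<in>histories v. hprofile h \<le> hprofile h')" by auto
  then show ?thesis unfolding worst_def by (rule someI_ex)
qed

definition choice :: "'v \<Rightarrow> 'v" where
  "choice v = (if histories v \<noteq> {} then \<sigma> (map (fst (worst v)) [0..<Suc (snd (worst v))])
     else some_successor E v)"

definition positional :: "'v list \<Rightarrow> 'v" where
  "positional h = choice (last h)"

lemma positional_memoryless: "memoryless positional"
  unfolding memoryless_def positional_def by blast

lemma positional_strategy: "strategy1 E V1 positional"
  unfolding strategy1_def positional_def
proof (intro allI impI)
  fix h :: "'v list"
  assume "h \<noteq> [] \<and> last h \<in> V1"
  then have "last h \<in> V1" by simp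
  show "(last h, choice (last h)) \<in> E"
  proof (cases "histories (last h) \<noteq> {}")
    case True
    obtain r n where rn: "worst (last h) = (r, n)" by (cases "worst (last h)")
    then have "r n = last h" using worst[OF True] history_wins by auto
    then have "(last h, \<sigma> (map r [0..<Suc n])) \<in> E"
      using winning \<open>last h \<in> V1\<close> history_last[of r n] unfolding winning1_def strategy1_def by metis
    then show ?thesis using True rn by (simp add: choice_def)
  next
    case False
    have "last h \<in> V" using game \<open>last h \<in> V1\<close> unfolding game_graph_def by blast
    then show ?thesis using False some_successor[OF game] by (simp add: choice_def)
  qed
qed

lemma history_extends:
  assumes rn: "(r, n) \<in> histories v" and edge: "(v, u) \<in> E"
    and follows: "v \<in> V1 \<Longrightarrow> u = \<sigma> (map r [0..<Suc n])"
  shows "\<exists>r'. (r', Suc n) \<in> histories u \<and> hprofile (r', Suc n) = hprofile (r, n) + edge_profile (w v u)"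
proof -
  have play: "is_play E v0 r" and cons: "consistent V1 \<sigma> r" and "r n = v"
    using rn unfolding histories_def by auto
  moreover have "strategy1 E V1 \<sigma>" using winning unfolding winning1_def by blast
  ultimately obtain r' where r': "is_play E v0 r'" "consistent V1 \<sigma> r'"
    and agree: "\<And>i. i \<le> n \<Longrightarrow> r' i = r i" and "r' (Suc n) = u"
    using extend_consistent_play[OF game _ play cons, where u = u] edge follows by auto
  have "(r', Suc n) \<in> histories u"
    using r' \<open>r' (Suc n) = u\<close> unfolding histories_def by simp
  moreover have "profile w r' 0 n = profile w r 0 n"
    by (rule profile_cong) (simp add: agree)
  then have "hprofile (r', Suc n) = hprofile (r, n) + edge_profile (w v u)"
    using agree[of n] \<open>r n = v\<close> \<open>r' (Suc n) = u\<close> by (simp add: hprofile_def profile_Suc)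
  ultimately show ?thesis by blast
qed

lemma worst_step:
  assumes "histories v \<noteq> {}" and "(v, u) \<in> E" and "v \<in> V1 \<Longrightarrow> u = choice v"
  shows "histories u \<noteq> {} \<and> hprofile (worst u) \<le> hprofile (worst v) + edge_profile (w v u)"
proof -
  obtain r n where rn: "worst v = (r, n)" by (cases "worst v")
  have "(r, n) \<in> histories v" using worst[OF assms(1)] rn by simp
  moreover have "v \<in> V1 \<Longrightarrow> u = \<sigma> (map r [0..<Suc n])"
    using assms(1,3) rn by (simp add: choice_def)
  ultimately obtain r' where r': "(r', Suc n) \<in> histories u"
    and prof: "hprofile (r', Suc n) = hprofile (r, n) + edge_profile (w v u)"
    using history_extends assms(2) by blast
  then have "histories u \<noteq> {}" by blast
  then show ?thesis using worst r' prof rn by metis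
qed

(* The empty history makes v0 reachable with profile 0. *)
lemma worst_initial: "histories v0 \<noteq> {} \<and> hprofile (worst v0) \<le> 0"
proof -
  have "\<exists>\<rho>. is_play E v0 \<rho> \<and> consistent V1 \<sigma> \<rho> \<and> (\<forall>i\<le>0. \<rho> i = v0)"
    using winning by (intro extend_consistent_prefix[OF game]) (auto simp: winning1_def)
  then obtain \<rho> where "(\<rho>, 0) \<in> histories v0" unfolding histories_def by auto
  moreover have "hprofile (\<rho>, 0) = 0" by (simp add: hprofile_def)
  ultimately show ?thesis using worst by (metis empty_iff)
qed

lemma positional_play_potential:
  assumes play: "is_play E v0 \<rho>" and cons: "consistent V1 positional \<rho>"
  shows "histories (\<rho> j) \<noteq> {}"
    and "i \<le> j \<Longrightarrow> hprofile (worst (\<rho> j)) \<le> hprofile (worst (\<rho> i)) + profile w \<rho> i j"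
proof -
  have one_step: "histories (\<rho> (Suc k)) \<noteq> {} \<and>
      hprofile (worst (\<rho> (Suc k))) \<le> hprofile (worst (\<rho> k)) + edge_profile (w (\<rho> k) (\<rho> (Suc k)))"
    if "histories (\<rho> k) \<noteq> {}" for k
  proof (rule worst_step[OF that])
    show "(\<rho> k, \<rho> (Suc k)) \<in> E" using play unfolding is_play_def by blast
    show "\<rho> (Suc k) = choice (\<rho> k)" if "\<rho> k \<in> V1"
      using cons that history_last[of \<rho> k] unfolding consistent_def positional_def by metis
  qed
  show reached: "histories (\<rho> j) \<noteq> {}" for j
  proof (induction j)
    case 0
    then show ?case using worst_initial play unfolding is_play_def by simp
  next
    case (Suc j)
    then show ?case using one_step by blast
  qed
  show "hprofile (worst (\<rho> j)) \<le> hprofile (worst (\<rho> i)) + profile w \<rho> i j" if "i \<le> j"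
    using that
  proof (induction j rule: dec_induct)
    case base
    then show ?case by simp
  next
    case (step k)
    have "hprofile (worst (\<rho> (Suc k))) \<le> hprofile (worst (\<rho> k)) + edge_profile (w (\<rho> k) (\<rho> (Suc k)))"
      using one_step reached by blast
    also have "\<dots> \<le> hprofile (worst (\<rho> i)) + profile w \<rho> i k + edge_profile (w (\<rho> k) (\<rho> (Suc k)))"
      using lex_add_right_mono[OF step.IH] by simp
    also have "\<dots> = hprofile (worst (\<rho> i)) + profile w \<rho> i (Suc k)"
      using step.hyps by (simp add: profile_Suc add.assoc)
    finally show ?case .
  qed
qed

(* The positional strategy is winning: cycles get profile >= 0 from the potential, and
   each prefix dominates the worst history to its endpoint, which meets the threshold. *)
lemma positional_winning: "winning1 E V1 v0 w \<nu> positional"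
  unfolding winning1_def
proof (intro conjI allI impI positional_strategy)
  fix \<rho> assume "is_play E v0 \<rho> \<and> consistent V1 positional \<rho>"
  then have play: "is_play E v0 \<rho>" and cons: "consistent V1 positional \<rho>" by auto
  note potential = positional_play_potential[OF play cons]
  have cycles: "\<exists>z. seg_weight w \<rho> i j = WFin z \<and> 0 \<le> z" if "i < j" "\<rho> i = \<rho> j" for i j
  proof -
    have "hprofile (worst (\<rho> i)) \<le> hprofile (worst (\<rho> i)) + profile w \<rho> i j"
      using potential(2)[of i j] that by simp
    then show ?thesis unfolding good_segment_iff by (rule lex_nonneg_if_le_add)
  qed
  have thresholds: "meets (seg_weight w \<rho> 0 j) (\<nu> (\<rho> j))" for j
  proof -
    obtain r n where rn: "worst (\<rho> j) = (r, n)" by (cases "worst (\<rho> j)")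
    then have "(r, n) \<in> histories (\<rho> j)" using worst potential(1) by metis
    then have "meets (seg_weight w r 0 n) (\<nu> (\<rho> j))"
      using history_wins unfolding wins1_def by metis
    moreover have "profile w r 0 n \<le> profile w \<rho> 0 j"
    proof -
      have "profile w r 0 n \<le> hprofile (worst v0) + profile w \<rho> 0 j"
        using potential(2)[of 0 j] play rn unfolding is_play_def by (simp add: hprofile_def)
      also have "\<dots> \<le> profile w \<rho> 0 j"
        using lex_add_right_mono[OF conjunct2[OF worst_initial]] by simp
      finally show ?thesis .
    qed
    ultimately show ?thesis by (rule meets_profile_mono)
  qed
  show "wins1 w \<nu> \<rho>" unfolding wins1_def using cycles thresholds by blast
qed

end

theorem lemma10:
  fixes V :: "'v set" and E :: "('v \<times> 'v) set" and V1 :: "'v set" and v0 :: 'v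
    and w :: "'v \<Rightarrow> 'v \<Rightarrow> wt" and \<nu> :: "'v \<Rightarrow> thr"
  assumes "game_graph V E V1 v0"
    and "\<forall>v\<in>V. \<forall>n. \<nu> v = TFin n \<longrightarrow> n \<ge> - 2 * maxW E w * int (card V)"
  shows "(\<exists>\<sigma>. winning1 E V1 v0 w \<nu> \<sigma>) \<longleftrightarrow> (\<exists>\<sigma>. memoryless \<sigma> \<and> winning1 E V1 v0 w \<nu> \<sigma>)"
proof
  assume "\<exists>\<sigma>. winning1 E V1 v0 w \<nu> \<sigma>"
  then obtain \<sigma> where "winning1 E V1 v0 w \<nu> \<sigma>" by blast
  then interpret winning_strategy V E V1 v0 w \<nu> \<sigma>
    using assms(1) by unfold_locales
  show "\<exists>\<sigma>. memoryless \<sigma> \<and> winning1 E V1 v0 w \<nu> \<sigma>"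
    using positional_memoryless positional_winning by blast
qed blast

end
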